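(* Let the setting, algorithm and notation be as described in the context, and assume $\frac12\widehat\Sigma_g+T\succeq0$. Then for every $k\ge1$, \[ (1-\tau)\sigma\|r^{k+1}\|^2+\sigma\|A^*x^{k+1}+B^*y^k-c\|^2\ \ge\ \max(1-\tau,1-\tau^{-1})\,\sigma\big(\|r^{k+1}\|^2-\|r^k\|^2\big)+(\xi_{k+1}-\xi_k)+\min(\tau,1+\tau-\tau^2)\,\sigma\big(\tau^{-1}\|r^{k+1}\|^2+\|B^*(y^{k+1}-y^k)\|^2\big). \]
   Context: Let $\mathcal X,\mathcal Y,\mathcal Z$ be finite-dimensional real Euclidean spaces with inner products $\langle\cdot,\cdot\rangle$ and induced norms $\|\cdot\|$. Let $p:\mathcal X\to(-\infty,+\infty]$ and $q:\mathcal Y\to(-\infty,+\infty]$ be closed proper convex functions, and let $f:\mathcal X\to\mathbb R$, $g:\mathcal Y\to\mathbb R$ be convex differentiable functions with Lipschitz continuous gradients. Let $A:\mathcal Z\to\mathcal X$, $B:\mathcal Z\to\mathcal Y$ be linear maps with adjoints $A^*,B^*$, and $c\in\mathcal Z$. Let $\Sigma_f,\widehat\Sigma_f$ (on $\mathcal X$) and $\Sigma_g,\widehat\Sigma_g$ (on $\mathcal Y$) be self-adjoint positive semidefinite linear operators with $\widehat\Sigma_f\succeq\Sigma_f$, $\widehat\Sigma_g\succeq\Sigma_g$, such that for all $x,x'\in\mathcal X$, $y,y'\in\mathcal Y$: $f(x')+\langle x-x',\nabla f(x')\rangle+\frac12\|x-x'\|^2_{\Sigma_f}\le f(x)\le f(x')+\langle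 x-x',\nabla f(x')\rangle+\frac12\|x-x'\|^2_{\widehat\Sigma_f}$ and the analogous two inequalities for $g$ with $\Sigma_g,\widehat\Sigma_g$. For a self-adjoint (possibly indefinite) operator $G$, $\|u\|_G^2:=\langle u,Gu\rangle$. Algorithm (Majorized iPADMM): let $\sigma>0$, $\tau>0$, and let $S:\mathcal X\to\mathcal X$, $T:\mathcal Y\to\mathcal Y$ be self-adjoint, possibly indefinite, linear operators with $\widehat\Sigma_f+S+\sigma AA^*\succeq0$ and $\widehat\Sigma_g+T+\sigma BB^*\succeq0$. Starting from $(x^0,y^0,z^0)\in\mathrm{dom}(p)\times\mathrm{dom}(q)\times\mathcal Z$, for $k=0,1,\dots$: $x^{k+1}\in\arg\min_{x}\{p(x)+\langle\nabla f(x^k),x\rangle+\frac12\|x-x^k\|^2_{\widehat\Sigma_f+S}+\langle z^k,A^*x\rangle+\frac\sigma2\|A^*x+B^*y^k-c\|^2\}$, $y^{k+1}\in\arg\min_{y}\{q(y)+\langle\nabla g(y^k),y\rangle+\frac12\|y-y^k\|^2_{\widehat\Sigma_g+T}+\langle z^k,B^*y\rangle+\frac\sigma2\|A^*x^{k+1}+B^*y-c\|^2\}$, $z^{k+1}=z^k+\tau\sigma(A^*x^{k+1}+B^*y^{k+1}-c)$ (the minimizers are assumed to exist). Notation: $r^k:=A^*x^k+B^*y^k-c$ and $\xi_{k+1}:=\|y^{k+1}-y^k\|^2_{\widehat\Sigma_g+T}$. *)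

theory Defs
  imports "HOL-Analysis.Analysis"
begin

definition epigraph_e :: "('a \<Rightarrow> ereal) \<Rightarrow> ('a \<times> real) set" where
  "epigraph_e p = {(x, t). p x \<le> ereal t}"

definition closed_proper_convex :: "('a::real_normed_vector \<Rightarrow> ereal) \<Rightarrow> bool" where
  "closed_proper_convex p \<longleftrightarrow>
     (\<forall>x. p x \<noteq> -\<infinity>) \<and> (\<exists>x. p x \<noteq> \<infinity>) \<and>
     convex (epigraph_e p) \<and> closed (epigraph_e p)"

definition self_adjoint :: "('a::real_inner \<Rightarrow> 'a) \<Rightarrow> bool" where
  "self_adjoint G \<longleftrightarrow> linear G \<and> (\<forall>u v. G u \<bullet> v = u \<bullet> G v)"

definition psd :: "('a::real_inner \<Rightarrow> 'a) \<Rightarrow> bool" where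
  "psd G \<longleftrightarrow> (\<forall>u. 0 \<le> u \<bullet> G u)"

definition qn :: "('a::real_inner \<Rightarrow> 'a) \<Rightarrow> 'a \<Rightarrow> real" where
  "qn G u = u \<bullet> G u"

definition argmin_e :: "('a \<Rightarrow> ereal) \<Rightarrow> 'a set" where
  "argmin_e F = {u. \<forall>v. F u \<le> F v}"

end

theory Submission imports Defs begin

text \<open>
  The optimality conditions of two consecutive \<open>y\<close>-subproblems, added together, express the
  monotonicity of \<open>\<partial>q\<close>. Substituting the multiplier update \<open>z(k) = z(k-1) + \<tau>\<sigma> r(k)\<close>
  turns this into an upper bound for \<open>\<sigma>\<langle>r(k+1) - (1-\<tau>) r(k), B\<^sup>*(y(k+1) - y(k))\<rangle>\<close> in terms
  of the gradient difference of \<open>g\<close> and the proximal terms. The gradient difference is controlled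
  by the quadratic majorization of \<open>g\<close>, and the assumption \<open>Sg'/2 + T \<succeq> 0\<close> makes the proximal
  terms telescope into \<open>\<xi>(k) - \<xi>(k+1)\<close>. The claim then follows by expanding the squared norms,
  separately for \<open>\<tau> \<le> 1\<close> and \<open>\<tau> > 1\<close>.
\<close>

lemma le_of_le_add_mult_small:
  fixes a b K :: real
  assumes "\<And>t. 0 < t \<Longrightarrow> t \<le> 1 \<Longrightarrow> a \<le> b + t * K"
  shows "a \<le> b"
proof (rule field_le_epsilon)
  fix e :: real assume e: "0 < e"
  define t where "t = min 1 (e / (\<bar>K\<bar> + 1))"
  have t: "0 < t" "t \<le> 1" using e by (auto simp: t_def)
  have "t * K \<le> t * (\<bar>K\<bar> + 1)" using t by (intro mult_left_mono) auto
  also have "\<dots> \<le> e / (\<bar>K\<bar> + 1) * (\<bar>K\<bar> + 1)"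
    by (intro mult_right_mono) (auto simp: t_def)
  also have "\<dots> = e" by simp
  finally show "a \<le> b + e" using assms[OF t] by linarith
qed

lemma qn_add_scaleR:
  assumes "self_adjoint G"
  shows "qn G (a + t *\<^sub>R e) = qn G a + 2 * t * (G a \<bullet> e) + t\<^sup>2 * qn G e"
proof -
  have lin: "linear G" and sym: "\<And>u v. G u \<bullet> v = u \<bullet> G v"
    using assms by (auto simp: self_adjoint_def)
  have "G (a + t *\<^sub>R e) = G a + t *\<^sub>R G e" using lin by (simp add: linear_add linear_scale)
  then show ?thesis unfolding qn_def
    by (simp add: inner_add_left inner_add_right sym[of a e] inner_commute[of e "G a"]
        algebra_simps power2_eq_square)
qed

lemma power2_norm_add_scaleR:
  fixes a b :: "'a::real_inner"
  shows "(norm (a + t *\<^sub>R b))\<^sup>2 = (norm a)\<^sup>2 + 2 * t * (a \<bullet> b) + t\<^sup>2 * (norm b)\<^sup>2"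
  unfolding power2_norm_eq_inner
  by (simp add: inner_add_left inner_add_right inner_commute[of b a] algebra_simps power2_eq_square)

lemma argmin_e_finite:
  assumes "closed_proper_convex q" and "u \<in> argmin_e (\<lambda>v. q v + ereal (h v))"
    and "q v \<noteq> \<infinity>"
  shows "q u = ereal (real_of_ereal (q u))"
proof -
  have "q u + ereal (h u) \<le> q v + ereal (h v)" using assms(2) by (simp add: argmin_e_def)
  with assms(3) have "q u \<noteq> \<infinity>" by auto
  moreover have "q u \<noteq> -\<infinity>" using assms(1) by (simp add: closed_proper_convex_def)
  ultimately show ?thesis by (cases "q u") auto
qed

lemma argmin_e_variational_ineq:
  fixes q :: "'a::real_normed_vector \<Rightarrow> ereal"
  assumes cv: "convex (epigraph_e q)" and u: "u \<in> argmin_e (\<lambda>v. q v + ereal (h v))"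
    and qu: "q u = ereal qu" and qv: "q v = ereal qv"
    and h: "\<And>t. h (u + t *\<^sub>R (v - u)) = h u + t * L + t\<^sup>2 * K"
  shows "qu \<le> qv + L"
proof (rule le_of_le_add_mult_small[where K = K])
  fix t :: real assume t0: "0 < t" and t1: "t \<le> 1"
  define w where "w = u + t *\<^sub>R (v - u)"
  have "(u, qu) \<in> epigraph_e q" "(v, qv) \<in> epigraph_e q"
    using qu qv by (simp_all add: epigraph_e_def)
  then have "(1 - t) *\<^sub>R (u, qu) + t *\<^sub>R (v, qv) \<in> epigraph_e q"
    using t0 t1 by (intro convexD[OF cv]) auto
  moreover have "(1 - t) *\<^sub>R (u, qu) + t *\<^sub>R (v, qv) = (w, (1 - t) * qu + t * qv)"
    by (simp add: w_def algebra_simps)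
  ultimately have qw: "q w \<le> ereal ((1 - t) * qu + t * qv)" by (simp add: epigraph_e_def)
  have "q u + ereal (h u) \<le> q w + ereal (h w)" using u by (simp add: argmin_e_def)
  also have "\<dots> \<le> ereal ((1 - t) * qu + t * qv) + ereal (h w)" using qw by (rule add_right_mono)
  finally have "qu + h u \<le> (1 - t) * qu + t * qv + h w" using qu by simp
  then have "t * qu \<le> t * (qv + L + t * K)"
    using h[of t] unfolding w_def by (simp add: algebra_simps power2_eq_square)
  then show "qu \<le> qv + L + t * K" using t0 by simp
qed

lemma argmin_e_prox_augmented_ineq:
  fixes q :: "'a::real_inner \<Rightarrow> ereal" and M :: "'a \<Rightarrow> 'b::real_inner"
  assumes cv: "convex (epigraph_e q)" and H: "self_adjoint H" and M: "linear M"
    and u: "u \<in> argmin_e (\<lambda>v. q v + ereal (a \<bullet> v + 1/2 * qn H (v - v0) + w \<bullet> M v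
                 + \<sigma>/2 * (norm (b + M v - c))\<^sup>2))"
    and qu: "q u = ereal qu" and qv: "q v = ereal qv"
  shows "qu \<le> qv + ((a + H (u - v0)) \<bullet> (v - u) + (w + \<sigma> *\<^sub>R (b + M u - c)) \<bullet> M (v - u))"
proof (rule argmin_e_variational_ineq[OF cv u qu qv])
  fix t :: real
  define e where "e = v - u"
  have shift: "u + t *\<^sub>R e - v0 = (u - v0) + t *\<^sub>R e" by (simp add: algebra_simps)
  have res: "b + M (u + t *\<^sub>R e) - c = (b + M u - c) + t *\<^sub>R M e"
    using M by (simp add: linear_add linear_scale algebra_simps)
  have Mu: "M (u + t *\<^sub>R e) = M u + t *\<^sub>R M e" using M by (simp add: linear_add linear_scale)
  show "a \<bullet> (u + t *\<^sub>R (v - u)) + 1/2 * qn H (u + t *\<^sub>R (v - u) - v0)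
        + w \<bullet> M (u + t *\<^sub>R (v - u)) + \<sigma>/2 * (norm (b + M (u + t *\<^sub>R (v - u)) - c))\<^sup>2
      = (a \<bullet> u + 1/2 * qn H (u - v0) + w \<bullet> M u + \<sigma>/2 * (norm (b + M u - c))\<^sup>2)
        + t * ((a + H (u - v0)) \<bullet> (v - u) + (w + \<sigma> *\<^sub>R (b + M u - c)) \<bullet> M (v - u))
        + t\<^sup>2 * (1/2 * qn H (v - u) + \<sigma>/2 * (norm (M (v - u)))\<^sup>2)"
    unfolding e_def[symmetric] shift res unfolding Mu qn_add_scaleR[OF H] power2_norm_add_scaleR
    by (simp add: inner_add_left inner_add_right algebra_simps)
qed

lemma consecutive_prox_steps_ineq:
  fixes q :: "'a::real_inner \<Rightarrow> ereal" and M :: "'a \<Rightarrow> 'b::real_inner" and j :: nat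
  assumes q: "closed_proper_convex q" and H: "self_adjoint H" and M: "linear M"
    and y0: "q (y 0) \<noteq> \<infinity>"
    and y_step: "\<And>j. y (Suc j) \<in> argmin_e (\<lambda>v. q v + ereal (G (y j) \<bullet> v
                   + 1/2 * qn H (v - y j) + z j \<bullet> M v + \<sigma>/2 * (norm (a (Suc j) + M v - c))\<^sup>2))"
    and z_step: "\<And>j. z (Suc j) = z j + (\<tau> * \<sigma>) *\<^sub>R (a (Suc j) + M (y (Suc j)) - c)"
  defines "r \<equiv> \<lambda>j. a j + M (y j) - c" and "d \<equiv> y (Suc (Suc j)) - y (Suc j)"
  shows "\<sigma> * (r (Suc (Suc j)) \<bullet> M d) - (1 - \<tau>) * \<sigma> * (r (Suc j) \<bullet> M d)
           \<le> (G (y j) - G (y (Suc j))) \<bullet> d - H (d - (y (Suc j) - y j)) \<bullet> d"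
proof -
  have linH: "linear H" using H by (simp add: self_adjoint_def)
  have q_cv: "convex (epigraph_e q)" using q by (simp add: closed_proper_convex_def)
  define Q where "Q i = real_of_ereal (q (y (Suc i)))" for i
  have Q: "q (y (Suc i)) = ereal (Q i)" for i
    unfolding Q_def by (rule argmin_e_finite[OF q y_step y0])
  have opt: "Q i \<le> Q l + ((G (y i) + H (y (Suc i) - y i)) \<bullet> (y (Suc l) - y (Suc i))
                + (z i + \<sigma> *\<^sub>R r (Suc i)) \<bullet> M (y (Suc l) - y (Suc i)))" for i l
    unfolding r_def by (rule argmin_e_prox_augmented_ineq[OF q_cv H M y_step Q Q])
  have "y (Suc j) - y (Suc (Suc j)) = - d" by (simp add: d_def)
  then have "Q (Suc j) \<le> Q j - ((G (y (Suc j)) + H d) \<bullet> d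
      + (z (Suc j) + \<sigma> *\<^sub>R r (Suc (Suc j))) \<bullet> M d)"
    using opt[of "Suc j" j] by (simp add: d_def[symmetric] linear_neg[OF M])
  moreover have "Q j \<le> Q (Suc j) + ((G (y j) + H (y (Suc j) - y j)) \<bullet> d
      + (z j + \<sigma> *\<^sub>R r (Suc j)) \<bullet> M d)"
    using opt[of j "Suc j"] by (simp only: d_def[symmetric])
  ultimately have "0 \<le> ((G (y j) + H (y (Suc j) - y j)) - (G (y (Suc j)) + H d)) \<bullet> d
      + ((z j + \<sigma> *\<^sub>R r (Suc j)) - (z (Suc j) + \<sigma> *\<^sub>R r (Suc (Suc j)))) \<bullet> M d"
    by (simp add: inner_diff_left)
  moreover have "z (Suc j) = z j + (\<tau> * \<sigma>) *\<^sub>R r (Suc j)" by (simp add: z_step r_def)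
  ultimately show ?thesis
    by (simp add: linear_diff[OF linH] linear_add[OF linH] inner_diff_left inner_add_left
        algebra_simps)
qed

lemma grad_diff_inner_ge:
  fixes g :: "'a::real_inner \<Rightarrow> real"
  assumes gb: "\<And>u u'. g u' + (u - u') \<bullet> Dg u' + 1/2 * qn Sg (u - u') \<le> g u
                       \<and> g u \<le> g u' + (u - u') \<bullet> Dg u' + 1/2 * qn Sg' (u - u')"
    and ps: "psd Sg" and lin: "linear Sg'"
  shows "(Dg x - Dg x') \<bullet> ((x - x') + 2 *\<^sub>R w) \<ge> - qn Sg' w"
proof -
  have p: "\<And>v. 0 \<le> qn Sg v" using ps by (simp add: psd_def qn_def)
  have qneg: "qn Sg' (- w) = qn Sg' w" using lin by (simp add: qn_def linear_neg)
  have "g x' + (x + w - x') \<bullet> Dg x' \<le> g (x + w)"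
    using gb[of x' "x + w"] p[of "x + w - x'"] by linarith
  moreover have "g (x + w) \<le> g x + w \<bullet> Dg x + 1/2 * qn Sg' w" using gb[of x "x + w"] by simp
  moreover have "g x + (x' - w - x) \<bullet> Dg x \<le> g (x' - w)"
    using gb[of x "x' - w"] p[of "x' - w - x"] by linarith
  moreover have "g (x' - w) \<le> g x' + (- w) \<bullet> Dg x' + 1/2 * qn Sg' w"
    using gb[of x' "x' - w"] qneg by simp
  ultimately show ?thesis
    by (simp add: inner_add_left inner_add_right inner_diff_left inner_diff_right inner_commute
        algebra_simps)
qed

text \<open>With \<open>d = y2 - y1\<close> and \<open>d' = y1 - y0\<close>, the identity
  \<open>qn H d' - qn H d = qn H (d - d') - 2 \<langle>H (d - d'), d\<rangle>\<close> reduces the claim to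
  \<open>2 \<langle>Dg y0 - Dg y1, d\<rangle> \<le> qn Sg' (d - d') / 2 \<le> qn H (d - d')\<close>.\<close>

lemma majorized_grad_step_bound:
  fixes g :: "'a::real_inner \<Rightarrow> real"
  assumes gb: "\<And>u u'. g u' + (u - u') \<bullet> Dg u' + 1/2 * qn Sg (u - u') \<le> g u
                       \<and> g u \<le> g u' + (u - u') \<bullet> Dg u' + 1/2 * qn Sg' (u - u')"
    and ps: "psd Sg" and Sg': "self_adjoint Sg'" and T: "self_adjoint T"
    and half_T: "psd (\<lambda>u. (1/2) *\<^sub>R Sg' u + T u)"
    and H: "H = (\<lambda>w. Sg' w + T w)"
  shows "2 * ((Dg y0 - Dg y1) \<bullet> (y2 - y1) - H ((y2 - y1) - (y1 - y0)) \<bullet> (y2 - y1))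
           \<le> qn H (y1 - y0) - qn H (y2 - y1)"
proof -
  define d where "d = y2 - y1"
  define e where "e = (y2 - y1) - (y1 - y0)"
  have linSg': "linear Sg'" and linT: "linear T"
    using Sg' T by (simp_all add: self_adjoint_def)
  have symH: "\<And>u v. H u \<bullet> v = u \<bullet> H v"
    using Sg' T by (simp add: H self_adjoint_def inner_add_left inner_add_right)
  have linH: "linear H" unfolding H using linSg' linT by (rule linear_compose_add)
  have "(Dg y1 - Dg y0) \<bullet> ((y1 - y0) + 2 *\<^sub>R ((1/2) *\<^sub>R e)) \<ge> - qn Sg' ((1/2) *\<^sub>R e)"
    by (rule grad_diff_inner_ge[OF gb ps linSg'])
  moreover have "(y1 - y0) + 2 *\<^sub>R ((1/2) *\<^sub>R e) = d" by (simp add: d_def e_def)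
  moreover have "qn Sg' ((1/2) *\<^sub>R e) = 1/4 * qn Sg' e"
    by (simp add: qn_def linear_scale[OF linSg'])
  ultimately have grad: "2 * ((Dg y0 - Dg y1) \<bullet> d) \<le> 1/2 * qn Sg' e"
    by (simp add: inner_diff_left)
  have "0 \<le> e \<bullet> ((1/2) *\<^sub>R Sg' e + T e)" using half_T by (simp add: psd_def)
  then have "1/2 * qn Sg' e \<le> qn H e"
    by (simp add: H qn_def inner_add_right)
  moreover have "qn H (y1 - y0) - qn H d = qn H e - 2 * (H e \<bullet> d)"
  proof -
    have "y1 - y0 = d - e" by (simp add: d_def e_def)
    then show ?thesis
      by (simp add: qn_def linear_diff[OF linH] inner_diff_left inner_diff_right
          symH[of d e] symH[of e d] inner_commute[of d "H e"])
  qed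
  ultimately show ?thesis using grad by (simp add: d_def e_def)
qed

lemma admm_scalar_bound:
  fixes \<sigma> \<tau> a b e m n X1 X2 :: real
  assumes s: "\<sigma> > 0" and t: "\<tau> > 0"
    and key: "2 * \<sigma> * m - 2 * (1 - \<tau>) * \<sigma> * n \<le> X2 - X1"
    and P1: "0 \<le> b + e - 2 * n" and P2: "0 \<le> b + 2 * \<tau> * n + \<tau>\<^sup>2 * e"
  shows "(1 - \<tau>) * \<sigma> * a + \<sigma> * (a - 2 * m + e)
           \<ge> max (1 - \<tau>) (1 - 1/\<tau>) * \<sigma> * (a - b) + (X1 - X2)
             + min \<tau> (1 + \<tau> - \<tau>\<^sup>2) * \<sigma> * (1/\<tau> * a + e)"
proof (cases "\<tau> \<le> 1")
  case True
  have tt: "\<tau> * \<tau> \<le> 1" using True t by (intro mult_le_one) auto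
  then have "1 - 1/\<tau> \<le> 1 - \<tau>" using t by (simp add: field_simps)
  then have mx: "max (1 - \<tau>) (1 - 1/\<tau>) = 1 - \<tau>" by simp
  have "\<tau>\<^sup>2 \<le> 1" using tt by (simp add: power2_eq_square)
  then have mn: "min \<tau> (1 + \<tau> - \<tau>\<^sup>2) = \<tau>" by simp
  have "0 \<le> \<sigma> * (1 - \<tau>) * (b + e - 2 * n)" using s True P1 by simp
  moreover have "\<tau> * (1/\<tau> * a) = a" using t by simp
  ultimately show ?thesis unfolding mx mn using key t by (simp add: algebra_simps)
next
  case False
  have tt: "1 \<le> \<tau> * \<tau>" using mult_mono[of 1 \<tau> 1 \<tau>] False by simp
  then have "1 - \<tau> \<le> 1 - 1/\<tau>" using t by (simp add: field_simps)
  then have mx: "max (1 - \<tau>) (1 - 1/\<tau>) = 1 - 1/\<tau>" by simp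
  have "\<tau> \<le> \<tau>\<^sup>2" using False t by (simp add: power2_eq_square)
  then have mn: "min \<tau> (1 + \<tau> - \<tau>\<^sup>2) = 1 + \<tau> - \<tau>\<^sup>2" using False by simp
  have "0 \<le> \<sigma> * (\<tau> - 1) / \<tau> * (b + 2 * \<tau> * n + \<tau>\<^sup>2 * e)" using s t False P2 by simp
  moreover have "(1 - \<tau>) * \<sigma> * a + \<sigma> * (a - 2 * m + e) - ((1 - 1/\<tau>) * \<sigma> * (a - b) + (X1 - X2)
           + (1 + \<tau> - \<tau>\<^sup>2) * \<sigma> * (1/\<tau> * a + e))
        = \<sigma> * (\<tau> - 1) / \<tau> * (b + 2 * \<tau> * n + \<tau>\<^sup>2 * e)
          + ((X2 - X1) - (2 * \<sigma> * m - 2 * (1 - \<tau>) * \<sigma> * n))"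
    using t by (simp add: field_simps power2_eq_square)
  ultimately show ?thesis unfolding mx mn using key by linarith
qed

lemma admm_residual_bound:
  fixes r0 r1 b :: "'a::real_inner"
  assumes \<sigma>: "\<sigma> > 0" and \<tau>: "\<tau> > 0"
    and key: "2 * \<sigma> * (r1 \<bullet> b) - 2 * (1 - \<tau>) * \<sigma> * (r0 \<bullet> b) \<le> X2 - X1"
  shows "(1 - \<tau>) * \<sigma> * (norm r1)\<^sup>2 + \<sigma> * (norm (r1 - b))\<^sup>2
           \<ge> max (1 - \<tau>) (1 - 1/\<tau>) * \<sigma> * ((norm r1)\<^sup>2 - (norm r0)\<^sup>2) + (X1 - X2)
             + min \<tau> (1 + \<tau> - \<tau>\<^sup>2) * \<sigma> * (1/\<tau> * (norm r1)\<^sup>2 + (norm b)\<^sup>2)"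
proof -
  have P1: "0 \<le> (norm r0)\<^sup>2 + (norm b)\<^sup>2 - 2 * (r0 \<bullet> b)"
    using power2_norm_add_scaleR[of r0 "-1" b] zero_le_power2[of "norm (r0 + (-1) *\<^sub>R b)"]
    by simp
  have P2: "0 \<le> (norm r0)\<^sup>2 + 2 * \<tau> * (r0 \<bullet> b) + \<tau>\<^sup>2 * (norm b)\<^sup>2"
    using power2_norm_add_scaleR[of r0 \<tau> b] zero_le_power2[of "norm (r0 + \<tau> *\<^sub>R b)"]
    by simp
  have "(norm (r1 - b))\<^sup>2 = (norm r1)\<^sup>2 - 2 * (r1 \<bullet> b) + (norm b)\<^sup>2"
    using power2_norm_add_scaleR[of r1 "-1" b] by simp
  with admm_scalar_bound[OF \<sigma> \<tau> key P1 P2] show ?thesis by simp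
qed

theorem lemma3p3:
  fixes p :: "'x::euclidean_space \<Rightarrow> ereal" and q :: "'y::euclidean_space \<Rightarrow> ereal"
    and f :: "'x \<Rightarrow> real" and g :: "'y \<Rightarrow> real"
    and Df :: "'x \<Rightarrow> 'x" and Dg :: "'y \<Rightarrow> 'y"
    and A :: "'z::euclidean_space \<Rightarrow> 'x" and B :: "'z \<Rightarrow> 'y" and c :: 'z
    and Sf Sf' S :: "'x \<Rightarrow> 'x" and Sg Sg' T :: "'y \<Rightarrow> 'y"
    and \<sigma> \<tau> :: real
    and x :: "nat \<Rightarrow> 'x" and y :: "nat \<Rightarrow> 'y" and z :: "nat \<Rightarrow> 'z"
    and k :: nat
  assumes p: "closed_proper_convex p" and q: "closed_proper_convex q"
    and f_conv: "convex_on UNIV f" and g_conv: "convex_on UNIV g"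
    and f_grad: "\<And>u. (f has_derivative (\<lambda>h. Df u \<bullet> h)) (at u)"
    and g_grad: "\<And>u. (g has_derivative (\<lambda>h. Dg u \<bullet> h)) (at u)"
    and f_lip: "\<exists>L. \<forall>u v. norm (Df u - Df v) \<le> L * norm (u - v)"
    and g_lip: "\<exists>L. \<forall>u v. norm (Dg u - Dg v) \<le> L * norm (u - v)"
    and A_lin: "linear A" and B_lin: "linear B"
    and Sf: "self_adjoint Sf" "psd Sf" and Sf': "self_adjoint Sf'" "psd Sf'"
    and Sf_le: "psd (\<lambda>u. Sf' u - Sf u)"
    and Sg: "self_adjoint Sg" "psd Sg" and Sg': "self_adjoint Sg'" "psd Sg'"
    and Sg_le: "psd (\<lambda>u. Sg' u - Sg u)"
    and f_bounds: "\<And>u u'. f u' + (u - u') \<bullet> Df u' + 1/2 * qn Sf (u - u') \<le> f u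
                       \<and> f u \<le> f u' + (u - u') \<bullet> Df u' + 1/2 * qn Sf' (u - u')"
    and g_bounds: "\<And>u u'. g u' + (u - u') \<bullet> Dg u' + 1/2 * qn Sg (u - u') \<le> g u
                       \<and> g u \<le> g u' + (u - u') \<bullet> Dg u' + 1/2 * qn Sg' (u - u')"
    and \<sigma>: "\<sigma> > 0" and \<tau>: "\<tau> > 0"
    and S: "self_adjoint S" and T: "self_adjoint T"
    and S_psd: "psd (\<lambda>u. Sf' u + S u + \<sigma> *\<^sub>R A (adjoint A u))"
    and T_psd: "psd (\<lambda>u. Sg' u + T u + \<sigma> *\<^sub>R B (adjoint B u))"
    and x0: "p (x 0) \<noteq> \<infinity>" and y0: "q (y 0) \<noteq> \<infinity>"
    and x_step: "\<And>j. x (Suc j) \<in> argmin_e (\<lambda>u. p u + ereal (Df (x j) \<bullet> u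
                   + 1/2 * qn (\<lambda>w. Sf' w + S w) (u - x j) + z j \<bullet> adjoint A u
                   + \<sigma>/2 * (norm (adjoint A u + adjoint B (y j) - c))\<^sup>2))"
    and y_step: "\<And>j. y (Suc j) \<in> argmin_e (\<lambda>v. q v + ereal (Dg (y j) \<bullet> v
                   + 1/2 * qn (\<lambda>w. Sg' w + T w) (v - y j) + z j \<bullet> adjoint B v
                   + \<sigma>/2 * (norm (adjoint A (x (Suc j)) + adjoint B v - c))\<^sup>2))"
    and z_step: "\<And>j. z (Suc j) = z j + (\<tau> * \<sigma>) *\<^sub>R
                   (adjoint A (x (Suc j)) + adjoint B (y (Suc j)) - c)"
    and half_T: "psd (\<lambda>u. (1/2) *\<^sub>R Sg' u + T u)"
    and k: "k \<ge> 1"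
  shows "let r = (\<lambda>j. adjoint A (x j) + adjoint B (y j) - c);
             \<xi> = (\<lambda>j. qn (\<lambda>w. Sg' w + T w) (y j - y (j - 1)))
         in (1 - \<tau>) * \<sigma> * (norm (r (Suc k)))\<^sup>2
              + \<sigma> * (norm (adjoint A (x (Suc k)) + adjoint B (y k) - c))\<^sup>2
            \<ge> max (1 - \<tau>) (1 - 1/\<tau>) * \<sigma> * ((norm (r (Suc k)))\<^sup>2 - (norm (r k))\<^sup>2)
              + (\<xi> (Suc k) - \<xi> k)
              + min \<tau> (1 + \<tau> - \<tau>\<^sup>2) * \<sigma> * ((1/\<tau>) * (norm (r (Suc k)))\<^sup>2
                   + (norm (adjoint B (y (Suc k) - y k)))\<^sup>2)"
proof -
  obtain k0 where k0: "k = Suc k0" using k by (cases k) auto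
  define H where "H = (\<lambda>w. Sg' w + T w)"
  define r where "r = (\<lambda>j. adjoint A (x j) + adjoint B (y j) - c)"
  define d where "d = y (Suc k) - y k"
  have H_sa: "self_adjoint H" unfolding H_def
    using Sg'(1) T by (auto simp: self_adjoint_def linear_compose_add inner_add_left inner_add_right)
  have "2 * \<sigma> * (r (Suc k) \<bullet> adjoint B d) - 2 * (1 - \<tau>) * \<sigma> * (r k \<bullet> adjoint B d)
      = 2 * (\<sigma> * (r (Suc k) \<bullet> adjoint B d) - (1 - \<tau>) * \<sigma> * (r k \<bullet> adjoint B d))"
    by (simp add: algebra_simps)
  also have "\<dots> \<le> 2 * ((Dg (y k0) - Dg (y k)) \<bullet> d - H (d - (y k - y k0)) \<bullet> d)"
    using consecutive_prox_steps_ineq[OF q H_sa adjoint_linear[OF B_lin] y0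
        y_step[folded H_def] z_step, of k0]
    unfolding k0 r_def d_def by simp
  also have "\<dots> \<le> qn H (y k - y k0) - qn H d"
    unfolding d_def by (rule majorized_grad_step_bound[OF g_bounds Sg(2) Sg'(1) T half_T H_def])
  finally have key: "2 * \<sigma> * (r (Suc k) \<bullet> adjoint B d) - 2 * (1 - \<tau>) * \<sigma> * (r k \<bullet> adjoint B d)
      \<le> qn H (y k - y k0) - qn H d" .
  have "adjoint A (x (Suc k)) + adjoint B (y k) - c = r (Suc k) - adjoint B d"
    by (simp add: r_def d_def linear_diff[OF adjoint_linear[OF B_lin]])
  moreover have "qn (\<lambda>w. Sg' w + T w) (y (Suc k) - y (Suc k - 1)) = qn H d"
    and "qn (\<lambda>w. Sg' w + T w) (y k - y (k - 1)) = qn H (y k - y k0)"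
    by (simp_all add: H_def d_def k0)
  ultimately show ?thesis
    using admm_residual_bound[OF \<sigma> \<tau> key]
    unfolding Let_def r_def[symmetric] d_def[symmetric] by simp
qed

end
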